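(* Let $\mathcal{T}$ be a single-elimination tournament with at least $2$ vertices and $u\in V(\mathcal{T})$. If there is no $x\in N^+(u)$ with $N^-(x)=\{a,u\}$ for some player $a\in P(\mathcal{T})$, then there exists a partition $\mathcal{A}$ of $P(\mathcal{T})\setminus P(u)$ such that: (i) for all $A\in\mathcal{A}$ and $a\in A$, there exists $b\in A\setminus\{a\}$ such that $b\in P(x)$ for every match $x$ with $a\in P(x)$; and (ii) $|\mathcal{A}|=\sum_{x\in M(\mathcal{T})\setminus V(\mathcal{T}_u)}\left\lfloor \frac{|N^-(x)\cap (P(\mathcal{T})\setminus P(u))|}{2}\right\rfloor$.
   Context: A single-elimination tournament is a finite directed graph $\mathcal{T}$ such that: (a) $\mathcal{T}$ has exactly one sink (vertex with no out-neighbours); (b) every non-sink vertex has exactly one out-neighbour; (c) $\mathcal{T}$ has no directed cycles; (d) $|N^-(v)|\ne 1$ for every vertex $v$, where $N^-(v)$ (resp. $N^+(v)$) denotes the set of in-neighbours (resp. out-neighbours) of $v$. The players $P(\mathcal{T})$ are the sources and the matches are $M(\mathcal{T})=V(\mathcal{T})\setminus P(\mathcal{T})$. For a vertex $u$, $P(u)$ is the set of players $a$ for which there is a directed walk from $a$ to $u$ (length $0$ allowed). For $u\in V(\mathcal{T})$, $\mathcal{T}_u$ is the digraph obtained from $\mathcal{T}$ by deleting every vertex $v$ with $P(v)\not\subseteq P(u)$. *)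

theory Defs
  imports Main "HOL-Library.Disjoint_Sets"
begin

definition out_nbrs :: "('a \<times> 'a) set \<Rightarrow> 'a \<Rightarrow> 'a set" where
  "out_nbrs E v = {w. (v, w) \<in> E}"

definition in_nbrs :: "('a \<times> 'a) set \<Rightarrow> 'a \<Rightarrow> 'a set" where
  "in_nbrs E v = {w. (w, v) \<in> E}"

definition se_tournament :: "'a set \<Rightarrow> ('a \<times> 'a) set \<Rightarrow> bool" where
  "se_tournament V E \<longleftrightarrow>
     finite V \<and> E \<subseteq> V \<times> V \<and>
     (\<exists>!s. s \<in> V \<and> out_nbrs E s = {}) \<and>
     (\<forall>v\<in>V. out_nbrs E v \<noteq> {} \<longrightarrow> (\<exists>!w. w \<in> out_nbrs E v)) \<and>
     acyclic E \<and>
     (\<forall>v\<in>V. card (in_nbrs E v) \<noteq> 1)"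

definition players :: "'a set \<Rightarrow> ('a \<times> 'a) set \<Rightarrow> 'a set" where
  "players V E = {v \<in> V. in_nbrs E v = {}}"

definition matches :: "'a set \<Rightarrow> ('a \<times> 'a) set \<Rightarrow> 'a set" where
  "matches V E = V - players V E"

definition playersOf :: "'a set \<Rightarrow> ('a \<times> 'a) set \<Rightarrow> 'a \<Rightarrow> 'a set" where
  "playersOf V E u = {a \<in> players V E. (a, u) \<in> E\<^sup>*}"

text \<open>Vertex set of the subtournament T_u.\<close>
definition sub_vertices :: "'a set \<Rightarrow> ('a \<times> 'a) set \<Rightarrow> 'a \<Rightarrow> 'a set" where
  "sub_vertices V E u = {v \<in> V. playersOf V E v \<subseteq> playersOf V E u}"

end

theory Submission
  imports Defs
begin

(* Call the players outside P(u) outside players. For every match x, split its outside in-neighbours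
   into card div 2 disjoint pairs; since each player has only one next match, all these pairs are
   disjoint, and their number is the required sum. An outside player joins its own pair if it has
   one, and otherwise some pair lying below its first match w. Such a pair exists: descending from w
   through matches not contained in T_u, one must reach a match with two outside in-neighbours,
   because a match whose in-neighbours are u and a single player is excluded by hypothesis. Every
   match containing a player lies above its first match, hence contains the whole chosen pair,
   which gives property (i). *)

lemma exists_disjoint_pairs:
  assumes "finite S"
  shows "\<exists>Q. disjoint Q \<and> (\<forall>B\<in>Q. B \<subseteq> S \<and> card B = 2) \<and> card Q = card S div 2"
  using assms
proof (induction "card S" arbitrary: S rule: less_induct)
  case less
  show ?case
  proof (cases "card S < 2")
    case True
    then show ?thesis by (intro exI[of _ "{}"]) auto
  next
    case False
    then have "\<not> card S \<le> Suc 0" by simp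
    then obtain p q where pq: "p \<in> S" "q \<in> S" "p \<noteq> q"
      using card_le_Suc0_iff_eq[OF less.prems] by blast
    let ?S' = "S - {p, q}"
    have card_S': "card ?S' = card S - 2"
      using pq less.prems by (subst card_Diff_subset) auto
    then have "card ?S' < card S"
      using False by simp
    then obtain Q where Q: "disjoint Q" "\<forall>B\<in>Q. B \<subseteq> ?S' \<and> card B = 2" "card Q = card ?S' div 2"
      using less.hyps finite_Diff[OF less.prems] by blast
    have "finite Q"
      using Q(2) less.prems by (metis Pow_iff finite_Diff finite_Pow_iff rev_finite_subset subsetI)
    moreover have "{p, q} \<notin> Q"
      using Q(2) pq by auto
    moreover have "disjoint (insert {p, q} Q)"
      using Q(1,2) by (auto simp: pairwise_insert disjnt_def)
    ultimately show ?thesis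
      using Q pq False card_S' by (intro exI[of _ "insert {p, q} Q"]) auto
  qed
qed

lemma partition_on_fibres:
  assumes "\<forall>a\<in>D. \<beta> a \<in> \<B>" and "\<forall>B\<in>\<B>. B \<noteq> {} \<and> B \<subseteq> D \<and> (\<forall>b\<in>B. \<beta> b = B)"
  shows "partition_on D ((\<lambda>B. {a\<in>D. \<beta> a = B}) ` \<B>)"
    and "card ((\<lambda>B. {a\<in>D. \<beta> a = B}) ` \<B>) = card \<B>"
proof -
  let ?fibre = "\<lambda>B. {a\<in>D. \<beta> a = B}"
  have fibre_superset: "B \<subseteq> ?fibre B" if "B \<in> \<B>" for B
    using assms(2) that by blast
  show "partition_on D (?fibre ` \<B>)"
  proof (rule partition_onI)
    show "\<Union> (?fibre ` \<B>) = D"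
      using assms(1) by blast
    show "disjnt p q" if "p \<in> ?fibre ` \<B>" "q \<in> ?fibre ` \<B>" "p \<noteq> q" for p q
      using that unfolding disjnt_def by auto
    show "{} \<notin> ?fibre ` \<B>"
    proof
      assume "{} \<in> ?fibre ` \<B>"
      then obtain B where B: "B \<in> \<B>" "?fibre B = {}"
        by (metis (no_types, lifting) imageE)
      have "B \<subseteq> {}"
        using fibre_superset[OF B(1)] unfolding B(2) .
      then show False
        using assms(2) B(1) by blast
    qed
  qed
  have "inj_on ?fibre \<B>"
  proof (rule inj_onI)
    fix B B'
    assume B: "B \<in> \<B>" "B' \<in> \<B>" "?fibre B = ?fibre B'"
    obtain b where "b \<in> B"
      using assms(2) B(1) by blast
    then have "b \<in> ?fibre B"
      using B(1) fibre_superset by blast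
    then have "\<beta> b = B'"
      using B(3) by simp
    moreover have "\<beta> b = B"
      using B(1) \<open>b \<in> B\<close> assms(2) by blast
    ultimately show "B = B'"
      by simp
  qed
  then show "card (?fibre ` \<B>) = card \<B>"
    by (rule card_image)
qed

locale single_elim =
  fixes V :: "'a set" and E :: "('a \<times> 'a) set"
  assumes se_tournament: "se_tournament V E"
begin

lemma finite_V: "finite V"
  and edges_in_V: "E \<subseteq> V \<times> V"
  and acyclic_E: "acyclic E"
  and card_in_nbrs_ne_1: "v \<in> V \<Longrightarrow> card (in_nbrs E v) \<noteq> 1"
  and unique_sink: "\<exists>!s. s \<in> V \<and> out_nbrs E s = {}"
  using se_tournament unfolding se_tournament_def by auto

lemma edge_vertices: "(x, y) \<in> E \<Longrightarrow> x \<in> V \<and> y \<in> V"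
  using edges_in_V by blast

lemma out_edge_unique:
  assumes "(x, y) \<in> E" "(x, z) \<in> E"
  shows "y = z"
proof -
  have "x \<in> V" "out_nbrs E x \<noteq> {}"
    using assms edges_in_V by (auto simp: out_nbrs_def)
  then have "\<exists>!w. w \<in> out_nbrs E x"
    using se_tournament unfolding se_tournament_def by blast
  then show ?thesis
    using assms by (auto simp: out_nbrs_def)
qed

lemma wf_E: "wf E" and wf_converse_E: "wf (E\<inverse>)"
proof -
  have "finite E"
    using finite_subset[OF edges_in_V] finite_V by blast
  then show "wf E" "wf (E\<inverse>)"
    using acyclic_E finite_acyclic_wf finite_acyclic_wf_converse by blast+
qed

lemma finite_in_nbrs: "finite (in_nbrs E v)"
proof -
  have "in_nbrs E v \<subseteq> V"
    using edges_in_V by (auto simp: in_nbrs_def)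
  then show ?thesis
    using finite_V finite_subset by blast
qed

lemma rtrancl_common_source_comparable:
  "(c, x) \<in> E\<^sup>* \<Longrightarrow> (c, y) \<in> E\<^sup>* \<Longrightarrow> (x, y) \<in> E\<^sup>* \<or> (y, x) \<in> E\<^sup>*"
proof (induction rule: converse_rtrancl_induct)
  case base
  then show ?case by simp
next
  case (step c c')
  show ?case
  proof (cases "c = y")
    case True
    then show ?thesis
      using step by (meson converse_rtrancl_into_rtrancl)
  next
    case False
    then obtain c'' where "(c, c'') \<in> E" "(c'', y) \<in> E\<^sup>*"
      using step.prems by (metis converse_rtranclE)
    then show ?thesis
      using step out_edge_unique by blast
  qed
qed

lemma trancl_through_out_edge: "(x, y) \<in> E \<Longrightarrow> (x, z) \<in> E\<^sup>+ \<Longrightarrow> (y, z) \<in> E\<^sup>*"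
  using out_edge_unique tranclD by metis

lemma in_nbrs_no_common_source:
  assumes "(y, w) \<in> E" "(y', w) \<in> E" "y \<noteq> y'" "(c, y) \<in> E\<^sup>*" "(c, y') \<in> E\<^sup>*"
  shows False
proof -
  have no_path_back: "(w, z) \<notin> E\<^sup>*" if "(z, w) \<in> E" for z
    using that acyclic_E unfolding acyclic_def by (meson rtrancl_into_trancl2)
  from rtrancl_common_source_comparable[OF assms(4,5)]
  show False
  proof
    assume "(y, y') \<in> E\<^sup>*"
    then have "(w, y') \<in> E\<^sup>*"
      using assms(1,3) trancl_through_out_edge by (metis rtranclD)
    then show False
      using no_path_back assms(2) by blast
  next
    assume "(y', y) \<in> E\<^sup>*"
    then have "(w, y) \<in> E\<^sup>*"
      using assms(2,3) trancl_through_out_edge by (metis rtranclD)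
    then show False
      using no_path_back assms(1) by blast
  qed
qed

lemma exists_player_rtrancl: "v \<in> V \<Longrightarrow> \<exists>c \<in> players V E. (c, v) \<in> E\<^sup>*"
proof (induction v rule: wf_induct_rule[OF wf_E])
  case (1 v)
  show ?case
  proof (cases "in_nbrs E v = {}")
    case True
    then show ?thesis
      using 1 by (auto simp: players_def)
  next
    case False
    then obtain y where "(y, v) \<in> E"
      by (auto simp: in_nbrs_def)
    then show ?thesis
      using 1 edge_vertices by (meson rtrancl.rtrancl_into_rtrancl)
  qed
qed

lemma rtrancl_to_player: "a \<in> players V E \<Longrightarrow> (c, a) \<in> E\<^sup>* \<Longrightarrow> c = a"
  by (auto simp: players_def in_nbrs_def elim: rtranclE)

lemma rtrancl_to_sink: "s \<in> V \<Longrightarrow> out_nbrs E s = {} \<Longrightarrow> v \<in> V \<Longrightarrow> (v, s) \<in> E\<^sup>*"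
proof (induction v rule: wf_induct_rule[OF wf_converse_E])
  case (1 v)
  show ?case
  proof (cases "out_nbrs E v = {}")
    case True
    then show ?thesis
      using 1 unique_sink by auto
  next
    case False
    then obtain y where "(v, y) \<in> E"
      by (auto simp: out_nbrs_def)
    then show ?thesis
      using 1 edge_vertices by (meson converse_rtrancl_into_rtrancl converseI)
  qed
qed

lemma playersOf_mono: "(x, y) \<in> E\<^sup>* \<Longrightarrow> playersOf V E x \<subseteq> playersOf V E y"
  by (auto simp: playersOf_def)

lemma playersOf_trancl_not_subset:
  assumes "(u, w) \<in> E\<^sup>+"
  shows "\<not> playersOf V E w \<subseteq> playersOf V E u"
proof
  assume sub: "playersOf V E w \<subseteq> playersOf V E u"
  obtain y where y: "(u, y) \<in> E\<^sup>*" "(y, w) \<in> E"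
    using assms by (metis tranclD2)
  have "w \<in> V" "y \<in> in_nbrs E w"
    using y(2) edge_vertices by (auto simp: in_nbrs_def)
  then have "in_nbrs E w \<noteq> {y}"
    using card_in_nbrs_ne_1 by force
  then obtain y' where y': "(y', w) \<in> E" "y' \<noteq> y"
    using \<open>y \<in> in_nbrs E w\<close> by (auto simp: in_nbrs_def)
  then obtain c where c: "c \<in> players V E" "(c, y') \<in> E\<^sup>*"
    using exists_player_rtrancl edge_vertices by blast
  then have "c \<in> playersOf V E w"
    using y'(1) by (auto simp: playersOf_def)
  then have "(c, y) \<in> E\<^sup>*"
    using sub y(1) by (auto simp: playersOf_def)
  then show False
    using in_nbrs_no_common_source y(2) y' c(2) by blast
qed

lemma playersOf_next_subset:
  assumes "a \<in> players V E" "(a, w) \<in> E" "x \<in> matches V E" "a \<in> playersOf V E x"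
  shows "playersOf V E w \<subseteq> playersOf V E x"
proof -
  have "(a, x) \<in> E\<^sup>+"
    using assms(1,3,4) by (auto simp: playersOf_def matches_def rtrancl_eq_or_trancl)
  then show ?thesis
    using assms(2) trancl_through_out_edge playersOf_mono by blast
qed

end

locale single_elim_vertex = single_elim +
  fixes u :: 'a
  assumes u_in_V: "u \<in> V"
    and u_not_paired_with_player: "\<not> (\<exists>x \<in> out_nbrs E u. \<exists>a \<in> players V E. in_nbrs E x = {a, u})"
begin

definition outside_players :: "'a set" where
  "outside_players = players V E - playersOf V E u"

definition outside_in_nbrs :: "'a \<Rightarrow> 'a set" where
  "outside_in_nbrs x = in_nbrs E x \<inter> outside_players"

lemma outside_in_nbrs_subset_playersOf: "outside_in_nbrs x \<subseteq> playersOf V E x"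
  by (auto simp: outside_in_nbrs_def outside_players_def in_nbrs_def playersOf_def)

lemma outside_in_nbrs_disjoint: "x \<noteq> y \<Longrightarrow> outside_in_nbrs x \<inter> outside_in_nbrs y = {}"
  using out_edge_unique by (auto simp: outside_in_nbrs_def in_nbrs_def)

lemma finite_outside_in_nbrs: "finite (outside_in_nbrs x)"
  using finite_in_nbrs by (simp add: outside_in_nbrs_def)

lemma outside_in_nbrs_nonempty_not_sub_vertex:
  assumes "outside_in_nbrs x \<noteq> {}"
  shows "x \<in> matches V E - sub_vertices V E u"
proof -
  obtain a where "a \<in> outside_in_nbrs x"
    using assms by blast
  then have "(a, x) \<in> E" "a \<in> playersOf V E x" "a \<notin> playersOf V E u"
    using outside_in_nbrs_subset_playersOf by (auto simp: outside_in_nbrs_def outside_players_def in_nbrs_def)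
  then show ?thesis
    using edge_vertices by (auto simp: matches_def players_def in_nbrs_def sub_vertices_def)
qed

lemma outside_player_has_out_edge:
  assumes "a \<in> outside_players"
  shows "\<exists>w. (a, w) \<in> E"
proof (rule ccontr)
  assume "\<nexists>w. (a, w) \<in> E"
  then have "out_nbrs E a = {}"
    by (auto simp: out_nbrs_def)
  moreover have "a \<in> players V E" "a \<notin> playersOf V E u"
    using assms by (auto simp: outside_players_def)
  ultimately have "(u, a) \<in> E\<^sup>*"
    using rtrancl_to_sink u_in_V by (auto simp: players_def)
  then show False
    using \<open>a \<in> players V E\<close> \<open>a \<notin> playersOf V E u\<close> rtrancl_to_player
    by (auto simp: playersOf_def)
qed

lemma in_nbr_inside_eq_u:
  assumes "(w, v) \<in> E" "playersOf V E w \<subseteq> playersOf V E u"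
    and "\<not> playersOf V E v \<subseteq> playersOf V E u"
  shows "w = u"
proof (rule ccontr)
  assume "w \<noteq> u"
  obtain c where "c \<in> players V E" "(c, w) \<in> E\<^sup>*"
    using exists_player_rtrancl edge_vertices assms(1) by blast
  then have "(c, u) \<in> E\<^sup>*"
    using assms(2) by (auto simp: playersOf_def)
  then have "(w, u) \<in> E\<^sup>+ \<or> (u, w) \<in> E\<^sup>+"
    using rtrancl_common_source_comparable \<open>(c, w) \<in> E\<^sup>*\<close> \<open>w \<noteq> u\<close>
    by (metis rtranclD)
  then show False
  proof
    assume "(w, u) \<in> E\<^sup>+"
    then show False
      using assms(1,3) trancl_through_out_edge playersOf_mono by blast
  next
    assume "(u, w) \<in> E\<^sup>+"
    then show False
      using assms(2) playersOf_trancl_not_subset by blast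
  qed
qed

lemma in_nbrs_subset_outside_in_nbrs_u:
  assumes "\<not> playersOf V E v \<subseteq> playersOf V E u"
    and inside_feeders: "\<forall>w \<in> matches V E. (w, v) \<in> E \<longrightarrow> playersOf V E w \<subseteq> playersOf V E u"
  shows "in_nbrs E v \<subseteq> outside_in_nbrs v \<union> {u}"
proof
  fix w
  assume w: "w \<in> in_nbrs E v"
  then have "(w, v) \<in> E"
    by (simp add: in_nbrs_def)
  show "w \<in> outside_in_nbrs v \<union> {u}"
  proof (cases "w \<in> outside_players")
    case True
    then show ?thesis
      using w by (simp add: outside_in_nbrs_def)
  next
    case False
    have "playersOf V E w \<subseteq> playersOf V E u"
    proof (cases "w \<in> players V E")
      case True
      then show ?thesis
        using False rtrancl_to_player by (auto simp: outside_players_def playersOf_def)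
    next
      case False
      then show ?thesis
        using inside_feeders \<open>(w, v) \<in> E\<close> edge_vertices by (auto simp: matches_def)
    qed
    then show ?thesis
      using in_nbr_inside_eq_u \<open>(w, v) \<in> E\<close> assms(1) by blast
  qed
qed

lemma two_le_card_outside_in_nbrs:
  assumes "v \<in> matches V E" "\<not> playersOf V E v \<subseteq> playersOf V E u"
    and "\<forall>w \<in> matches V E. (w, v) \<in> E \<longrightarrow> playersOf V E w \<subseteq> playersOf V E u"
  shows "2 \<le> card (outside_in_nbrs v)"
proof (rule ccontr)
  assume "\<not> 2 \<le> card (outside_in_nbrs v)"
  have sub: "in_nbrs E v \<subseteq> outside_in_nbrs v \<union> {u}"
    using assms(2,3) by (rule in_nbrs_subset_outside_in_nbrs_u)
  have "v \<in> V" "in_nbrs E v \<noteq> {}"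
    using assms(1) by (auto simp: matches_def players_def)
  then have "2 \<le> card (in_nbrs E v)"
    using card_in_nbrs_ne_1 finite_in_nbrs by (metis One_nat_def card_0_eq less_2_cases_iff not_less)
  have "card (in_nbrs E v) \<le> card (outside_in_nbrs v \<union> {u})"
    using sub finite_outside_in_nbrs by (intro card_mono) auto
  also have "\<dots> \<le> card (outside_in_nbrs v) + 1"
    using card_Un_le[of _ "{u}"] by simp
  finally have "card (outside_in_nbrs v) = 1"
    using \<open>2 \<le> card (in_nbrs E v)\<close> \<open>\<not> 2 \<le> card (outside_in_nbrs v)\<close> by linarith
  then obtain a where a: "outside_in_nbrs v = {a}"
    by (rule card_1_singletonE)
  have "u \<in> in_nbrs E v"
  proof (rule ccontr)
    assume "u \<notin> in_nbrs E v"
    then have "card (in_nbrs E v) \<le> card {a}"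
      using sub a by (intro card_mono) auto
    then show False
      using \<open>2 \<le> card (in_nbrs E v)\<close> by simp
  qed
  with sub a have "in_nbrs E v = {a, u}" "a \<in> players V E" "v \<in> out_nbrs E u"
    by (auto simp: outside_in_nbrs_def outside_players_def in_nbrs_def out_nbrs_def)
  then show False
    using u_not_paired_with_player by blast
qed

lemma exists_below_two_le_card_outside_in_nbrs:
  "v \<in> matches V E \<Longrightarrow> \<not> playersOf V E v \<subseteq> playersOf V E u \<Longrightarrow>
    \<exists>x. (x, v) \<in> E\<^sup>* \<and> 2 \<le> card (outside_in_nbrs x)"
proof (induction v rule: wf_induct_rule[OF wf_E])
  case (1 v)
  show ?case
  proof (cases "\<exists>w \<in> matches V E. (w, v) \<in> E \<and> \<not> playersOf V E w \<subseteq> playersOf V E u")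
    case True
    then obtain w x where "(w, v) \<in> E" "(x, w) \<in> E\<^sup>*" "2 \<le> card (outside_in_nbrs x)"
      using 1 by blast
    then show ?thesis
      by (meson rtrancl.rtrancl_into_rtrancl)
  next
    case False
    then have "2 \<le> card (outside_in_nbrs v)"
      using 1 two_le_card_outside_in_nbrs by blast
    then show ?thesis
      by blast
  qed
qed

definition pairing :: "'a \<Rightarrow> 'a set set" where
  "pairing x = (SOME Q. disjoint Q \<and> (\<forall>B\<in>Q. B \<subseteq> outside_in_nbrs x \<and> card B = 2) \<and>
                        card Q = card (outside_in_nbrs x) div 2)"

lemma
  shows disjoint_pairing: "disjoint (pairing x)"
    and pairing_subset: "B \<in> pairing x \<Longrightarrow> B \<subseteq> outside_in_nbrs x"
    and card_pairing_block: "B \<in> pairing x \<Longrightarrow> card B = 2"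
    and card_pairing: "card (pairing x) = card (outside_in_nbrs x) div 2"
proof -
  have "disjoint (pairing x) \<and> (\<forall>B\<in>pairing x. B \<subseteq> outside_in_nbrs x \<and> card B = 2) \<and>
        card (pairing x) = card (outside_in_nbrs x) div 2"
    unfolding pairing_def
    by (rule someI_ex) (rule exists_disjoint_pairs[OF finite_outside_in_nbrs])
  then show "disjoint (pairing x)" "B \<in> pairing x \<Longrightarrow> B \<subseteq> outside_in_nbrs x"
    "B \<in> pairing x \<Longrightarrow> card B = 2" "card (pairing x) = card (outside_in_nbrs x) div 2"
    by auto
qed

lemma finite_pairing: "finite (pairing x)"
proof (rule finite_subset)
  show "pairing x \<subseteq> Pow (outside_in_nbrs x)"
    using pairing_subset by blast
qed (simp add: finite_outside_in_nbrs)

lemma pairing_inter_empty: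
  assumes "x \<noteq> y"
  shows "pairing x \<inter> pairing y = {}"
proof -
  have "B = {}" if "B \<in> pairing x" "B \<in> pairing y" for B
    using that pairing_subset outside_in_nbrs_disjoint[OF assms] by blast
  moreover have "{} \<notin> pairing x"
    using card_pairing_block by fastforce
  ultimately show ?thesis
    by blast
qed

definition blocks :: "'a set set" where
  "blocks = (\<Union>x \<in> matches V E - sub_vertices V E u. pairing x)"

lemma block_in_pairing:
  assumes "B \<in> blocks"
  obtains x where "B \<in> pairing x"
  using assms unfolding blocks_def by blast

lemma blocks_subset_outside_players: "B \<in> blocks \<Longrightarrow> B \<subseteq> outside_players"
  by (metis block_in_pairing pairing_subset le_infE outside_in_nbrs_def)

lemma card_block: "B \<in> blocks \<Longrightarrow> card B = 2"
  by (elim block_in_pairing card_pairing_block)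

lemma disjoint_blocks: "disjoint blocks"
  unfolding blocks_def
proof (rule disjoint_UN)
  show "disjoint (pairing x)" for x
    by (rule disjoint_pairing)
  have "\<Union> (pairing x) \<subseteq> outside_in_nbrs x" for x
    using pairing_subset by blast
  then show "disjoint_family_on (\<lambda>x. \<Union> (pairing x)) (matches V E - sub_vertices V E u)"
    using outside_in_nbrs_disjoint unfolding disjoint_family_on_def by blast
qed

lemma card_blocks:
  "card blocks = (\<Sum>x \<in> matches V E - sub_vertices V E u. card (outside_in_nbrs x) div 2)"
proof -
  have "finite (matches V E - sub_vertices V E u)"
    using finite_V by (simp add: matches_def)
  then have "card blocks = (\<Sum>x \<in> matches V E - sub_vertices V E u. card (pairing x))"
    unfolding blocks_def
    using pairing_inter_empty finite_pairing
    by (intro card_UN_disjoint') (auto simp: disjoint_family_on_def)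
  then show ?thesis
    by (simp add: card_pairing)
qed

lemma exists_block_below:
  assumes "a \<in> outside_players" "(a, w) \<in> E"
  shows "\<exists>B \<in> blocks. B \<subseteq> playersOf V E w \<and> (a \<in> \<Union>blocks \<longrightarrow> a \<in> B)"
proof (cases "a \<in> \<Union>blocks")
  case True
  then obtain B x where B: "B \<in> blocks" "a \<in> B" "B \<subseteq> outside_in_nbrs x"
    by (meson UnionE block_in_pairing pairing_subset)
  then have "x = w"
    using assms(2) out_edge_unique by (auto simp: outside_in_nbrs_def in_nbrs_def)
  then show ?thesis
    using B outside_in_nbrs_subset_playersOf by blast
next
  case False
  have "a \<in> playersOf V E w" "a \<notin> playersOf V E u"
    using assms by (auto simp: outside_players_def playersOf_def)
  moreover have "w \<in> matches V E"
    using assms(2) edge_vertices by (auto simp: matches_def players_def in_nbrs_def)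
  ultimately obtain x where x: "(x, w) \<in> E\<^sup>*" "2 \<le> card (outside_in_nbrs x)"
    using exists_below_two_le_card_outside_in_nbrs by blast
  have "outside_in_nbrs x \<noteq> {}"
    using x(2) by auto
  then have "x \<in> matches V E - sub_vertices V E u"
    by (rule outside_in_nbrs_nonempty_not_sub_vertex)
  obtain B where B: "B \<in> pairing x"
    using card_pairing[of x] x(2) by fastforce
  have "B \<in> blocks"
    using \<open>x \<in> matches V E - sub_vertices V E u\<close> B unfolding blocks_def by blast
  moreover have "B \<subseteq> playersOf V E w"
    using pairing_subset[OF B] outside_in_nbrs_subset_playersOf playersOf_mono[OF x(1)] by blast
  ultimately show ?thesis
    using False by blast
qed

definition chosen_block :: "'a \<Rightarrow> 'a set" where
  "chosen_block a = (SOME B. B \<in> blocks \<and>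
     (\<forall>x \<in> matches V E. a \<in> playersOf V E x \<longrightarrow> B \<subseteq> playersOf V E x) \<and> (a \<in> \<Union>blocks \<longrightarrow> a \<in> B))"

lemma
  assumes "a \<in> outside_players"
  shows chosen_block_in_blocks: "chosen_block a \<in> blocks"
    and chosen_block_subset_playersOf:
      "x \<in> matches V E \<Longrightarrow> a \<in> playersOf V E x \<Longrightarrow> chosen_block a \<subseteq> playersOf V E x"
    and in_chosen_block: "a \<in> \<Union>blocks \<Longrightarrow> a \<in> chosen_block a"
proof -
  obtain w where w: "(a, w) \<in> E"
    using outside_player_has_out_edge[OF assms] by blast
  then obtain B where B: "B \<in> blocks" "B \<subseteq> playersOf V E w" "a \<in> \<Union>blocks \<longrightarrow> a \<in> B"
    using exists_block_below[OF assms] by blast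
  have "a \<in> players V E"
    using assms by (simp add: outside_players_def)
  have B_below: "B \<subseteq> playersOf V E x" if "x \<in> matches V E" "a \<in> playersOf V E x" for x
    using B(2) playersOf_next_subset[OF \<open>a \<in> players V E\<close> w that] by (rule subset_trans)
  have "chosen_block a \<in> blocks \<and>
     (\<forall>x \<in> matches V E. a \<in> playersOf V E x \<longrightarrow> chosen_block a \<subseteq> playersOf V E x) \<and>
     (a \<in> \<Union>blocks \<longrightarrow> a \<in> chosen_block a)"
    unfolding chosen_block_def by (rule someI[of _ B]) (use B B_below in blast)
  then show "chosen_block a \<in> blocks"
    "x \<in> matches V E \<Longrightarrow> a \<in> playersOf V E x \<Longrightarrow> chosen_block a \<subseteq> playersOf V E x"
    "a \<in> \<Union>blocks \<Longrightarrow> a \<in> chosen_block a"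
    by blast+
qed

lemma chosen_block_eq:
  assumes "B \<in> blocks" "b \<in> B"
  shows "chosen_block b = B"
proof -
  have b: "b \<in> outside_players"
    using assms blocks_subset_outside_players by blast
  then have "chosen_block b \<in> blocks" "b \<in> chosen_block b"
    using assms chosen_block_in_blocks in_chosen_block by blast+
  then show ?thesis
    using disjoint_blocks assms by (auto simp: pairwise_def disjnt_def)
qed

definition player_classes :: "'a set set" where
  "player_classes = (\<lambda>B. {a \<in> outside_players. chosen_block a = B}) ` blocks"

lemma partition_on_player_classes: "partition_on outside_players player_classes"
  and card_player_classes: "card player_classes = card blocks"
proof -
  have "\<forall>B \<in> blocks. B \<noteq> {} \<and> B \<subseteq> outside_players \<and> (\<forall>b \<in> B. chosen_block b = B)"
    using card_block blocks_subset_outside_players chosen_block_eq by fastforce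
  with chosen_block_in_blocks show "partition_on outside_players player_classes" "card player_classes = card blocks"
    unfolding player_classes_def by (blast intro: partition_on_fibres)+
qed

lemma player_class_partner:
  assumes "A \<in> player_classes" "a \<in> A"
  shows "\<exists>b \<in> A - {a}. \<forall>x \<in> matches V E. a \<in> playersOf V E x \<longrightarrow> b \<in> playersOf V E x"
proof -
  obtain B where B: "B \<in> blocks" "A = {a' \<in> outside_players. chosen_block a' = B}"
    using assms(1) unfolding player_classes_def by blast
  then have a: "a \<in> outside_players" "chosen_block a = B"
    using assms(2) by auto
  have "B \<subseteq> A"
    using blocks_subset_outside_players[OF B(1)] chosen_block_eq[OF B(1)] unfolding B(2) by auto
  moreover obtain b where b: "b \<in> B" "b \<noteq> a"
    using card_block[OF B(1)] by (metis card_2_iff insertCI)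
  ultimately show ?thesis
    using chosen_block_subset_playersOf[OF a(1)] a(2) by blast
qed

end

theorem lemma5p12:
  fixes V :: "'a set" and E :: "('a \<times> 'a) set" and u :: 'a
  assumes "se_tournament V E"
    and "card V \<ge> 2"
    and "u \<in> V"
    and "\<not> (\<exists>x \<in> out_nbrs E u. \<exists>a \<in> players V E. in_nbrs E x = {a, u})"
  shows "\<exists>\<A>. partition_on (players V E - playersOf V E u) \<A> \<and>
           (\<forall>A \<in> \<A>. \<forall>a \<in> A. \<exists>b \<in> A - {a}.
               \<forall>x \<in> matches V E. a \<in> playersOf V E x \<longrightarrow> b \<in> playersOf V E x) \<and>
           card \<A> = (\<Sum>x \<in> matches V E - sub_vertices V E u.
               card (in_nbrs E x \<inter> (players V E - playersOf V E u)) div 2)"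
proof -
  interpret single_elim_vertex V E u
    using assms(1,3,4) by unfold_locales
  have "\<forall>A \<in> player_classes. \<forall>a \<in> A. \<exists>b \<in> A - {a}.
      \<forall>x \<in> matches V E. a \<in> playersOf V E x \<longrightarrow> b \<in> playersOf V E x"
    using player_class_partner by blast
  moreover have "card player_classes =
      (\<Sum>x \<in> matches V E - sub_vertices V E u. card (outside_in_nbrs x) div 2)"
    using card_player_classes card_blocks by simp
  ultimately show ?thesis
    using partition_on_player_classes unfolding outside_in_nbrs_def outside_players_def
    by (intro exI[of _ player_classes]) simp
qed
end
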